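(* Let $A$ be an Archimedean semiprime $f$-algebra which is bounded quasi-inversion closed, and let $a\in A$ with $a\le 0$. Then $a$ is quasi-invertible and its quasi-inverse $a^\ast$ satisfies $0\le a^\ast$.
   Context: An $f$-algebra is a real associative algebra that is a vector lattice with $A_+A_+\subseteq A_+$ and such that $a\wedge b=0$ implies $ac\wedge b=ca\wedge b=0$ for all $c\in A_+$; it is semiprime if $0$ is its only nilpotent element. An element $a\in A$ is quasi-invertible if there is $a^\ast\in A$ (necessarily unique, called the quasi-inverse) with $a+a^\ast=aa^\ast$; $Q(A)$ denotes the set of such elements. $A$ is bounded quasi-inversion closed if for every $a\in A$, $|a|\le|a^2-a|$ implies $a\in Q(A)$. *)

theory Defs
  imports "HOL-Analysis.Analysis"
begin

definition vabs :: "'a::{ordered_real_vector, lattice} \<Rightarrow> 'a" where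
  "vabs a = sup a (- a)"

text \<open>Positive powers: npow1 a n = a^(n+1) (no unit needed).\<close>
fun npow1 :: "'a::times \<Rightarrow> nat \<Rightarrow> 'a" where
  "npow1 a 0 = a"
| "npow1 a (Suc n) = a * npow1 a n"

definition f_algebra :: "'a::{real_algebra, ordered_real_vector, lattice} itself \<Rightarrow> bool" where
  "f_algebra _ \<longleftrightarrow>
     (\<forall>a b::'a. 0 \<le> a \<and> 0 \<le> b \<longrightarrow> 0 \<le> a * b) \<and>
     (\<forall>a b c::'a. inf a b = 0 \<and> 0 \<le> c \<longrightarrow> inf (a * c) b = 0 \<and> inf (c * a) b = 0)"

definition archimedean_vl :: "'a::{ordered_real_vector, lattice} itself \<Rightarrow> bool" where
  "archimedean_vl _ \<longleftrightarrow>
     (\<forall>a b::'a. 0 \<le> a \<and> (\<forall>n::nat. of_nat n *\<^sub>R a \<le> b) \<longrightarrow> a = 0)"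

definition semiprime :: "'a::{real_algebra} itself \<Rightarrow> bool" where
  "semiprime _ \<longleftrightarrow> (\<forall>(a::'a) n. npow1 a n = 0 \<longrightarrow> a = 0)"

definition quasi_inverse :: "'a::ring \<Rightarrow> 'a \<Rightarrow> bool" where
  "quasi_inverse a b \<longleftrightarrow> a + b = a * b"

definition quasi_invertible :: "'a::ring \<Rightarrow> bool" where
  "quasi_invertible a \<longleftrightarrow> (\<exists>b. quasi_inverse a b)"

definition bqi_closed :: "'a::{real_algebra, ordered_real_vector, lattice} itself \<Rightarrow> bool" where
  "bqi_closed _ \<longleftrightarrow> (\<forall>a::'a. vabs a \<le> vabs (a * a - a) \<longrightarrow> quasi_invertible a)"

end

theory Submission
  imports Defs "HOL-Library.Lattice_Algebras"
begin

text \<open>Write \<open>c = - a \<ge> 0\<close>. Quasi-invertibility follows from bounded quasi-inversion closedness,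
  since \<open>|a| = c \<le> c\<^sup>2 + c = |a\<^sup>2 - a|\<close>. If \<open>b\<close> is a quasi-inverse, then \<open>b + c b = c\<close>;
  splitting \<open>b = b\<^sup>+ - b\<^sup>-\<close> gives \<open>b\<^sup>- \<le> b\<^sup>- + c b\<^sup>- = b\<^sup>+ + c b\<^sup>+ - c \<le> b\<^sup>+ + c b\<^sup>+\<close>. In an
  \<open>f\<close>-algebra \<open>b\<^sup>-\<close> is disjoint from \<open>b\<^sup>+\<close> and hence from \<open>c b\<^sup>+\<close>, so from their sum, which
  forces \<open>b\<^sup>- = 0\<close>.\<close>

context lattice_ab_group_add
begin

lemma inf_add_eq_zero:
  assumes "0 \<le> x" "0 \<le> y" "inf z x = 0" "inf z y = 0"
  shows "inf z (x + y) = 0"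
proof -
  define w where "w = inf z (x + y)"
  have "0 \<le> z" using assms(3) by (metis inf.cobounded1)
  then have "0 \<le> w" unfolding w_def using assms(1,2) by (simp add: add_nonneg_nonneg)
  have "w - y \<le> inf z x"
  proof (rule le_infI)
    show "w - y \<le> z" using assms(2) unfolding w_def
      by (metis diff_le_eq inf.coboundedI1 le_add_same_cancel1 order_refl)
    show "w - y \<le> x" unfolding w_def by (simp add: diff_le_eq)
  qed
  then have "w \<le> inf z y" using assms(3) unfolding w_def by simp
  then have "w \<le> 0" using assms(4) by simp
  then show ?thesis using \<open>0 \<le> w\<close> unfolding w_def by (rule order.antisym)
qed

lemma sup_zero_diff_sup_uminus_zero: "sup a 0 - sup (- a) 0 = a"
  using prts[of a] pprt_neg[of a] by (simp add: pprt_def nprt_def)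

lemma inf_sup_zero_sup_uminus_zero: "inf (sup a 0) (sup (- a) 0) = 0"
proof -
  let ?p = "sup a 0" and ?m = "sup (- a) 0"
  have "inf ?p ?m - ?m = inf (?p - ?m) (?m - ?m)"
    unfolding diff_conv_add_uminus by (rule add_inf_distrib_right)
  also have "\<dots> = inf a 0" by (simp only: sup_zero_diff_sup_uminus_zero diff_self)
  also have "\<dots> = - ?m" by (simp add: neg_sup_eq_inf)
  finally show ?thesis by simp
qed

end

lemma lattice_ab_group_add_vector_lattice:
  "class.lattice_ab_group_add (+) (0::'a::{ordered_real_vector, lattice}) (-) uminus (\<le>) (<) inf sup"
  by unfold_locales

lemma f_algebra_mult_nonneg:
  fixes x y :: "'a::{real_algebra, ordered_real_vector, lattice}"
  assumes "f_algebra TYPE('a)" "0 \<le> x" "0 \<le> y"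
  shows "0 \<le> x * y"
  using assms unfolding f_algebra_def by blast

lemma f_algebra_inf_mult_left_eq_zero:
  fixes x y c :: "'a::{real_algebra, ordered_real_vector, lattice}"
  assumes "f_algebra TYPE('a)" "inf x y = 0" "0 \<le> c"
  shows "inf (c * x) y = 0"
  using assms unfolding f_algebra_def by blast

lemma quasi_invertible_nonpos:
  fixes a :: "'a::{real_algebra, ordered_real_vector, lattice}"
  assumes "f_algebra TYPE('a)" "bqi_closed TYPE('a)" "a \<le> 0"
  shows "quasi_invertible a"
proof -
  have "vabs a = - a"
    unfolding vabs_def using assms(3) by (simp add: sup_absorb2 order_trans[OF assms(3)])
  moreover have "a * a - a = (- a) * (- a) + (- a)" by simp
  moreover have "0 \<le> (- a) * (- a)" using f_algebra_mult_nonneg[OF assms(1)] assms(3) by (metis neg_0_le_iff_le)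
  ultimately have "vabs a \<le> vabs (a * a - a)"
    unfolding vabs_def by (simp add: le_supI1 add_nonneg_nonneg)
  then show ?thesis using assms(2) unfolding bqi_closed_def by blast
qed

lemma quasi_inverse_of_nonpos_nonneg:
  fixes a b :: "'a::{real_algebra, ordered_real_vector, lattice}"
  assumes f_alg: "f_algebra TYPE('a)" and "a \<le> 0" and "quasi_inverse a b"
  shows "0 \<le> b"
proof -
  define c where "c = - a"
  define p where "p = sup b 0"
  define m where "m = sup (- b) 0"
  note vl = lattice_ab_group_add_vector_lattice
  have "0 \<le> c" "0 \<le> p" "0 \<le> m" using \<open>a \<le> 0\<close> unfolding c_def p_def m_def by simp_all
  have b_split: "b = p - m"
    unfolding p_def m_def by (rule lattice_ab_group_add.sup_zero_diff_sup_uminus_zero[OF vl, symmetric])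
  have "inf p m = 0"
    unfolding p_def m_def by (rule lattice_ab_group_add.inf_sup_zero_sup_uminus_zero[OF vl])
  then have "inf m p = 0" and "inf m (c * p) = 0"
    using f_algebra_inf_mult_left_eq_zero[OF f_alg _ \<open>0 \<le> c\<close>] by (simp_all add: inf_commute)
  then have disj: "inf m (p + c * p) = 0"
    using lattice_ab_group_add.inf_add_eq_zero[OF vl] \<open>0 \<le> p\<close> \<open>0 \<le> c\<close>
      f_algebra_mult_nonneg[OF f_alg] by blast
  have "b + c * b = c" using \<open>quasi_inverse a b\<close> unfolding quasi_inverse_def c_def
    by (simp add: algebra_simps)
  then have "m + c * m = p + c * p - c" unfolding b_split by (simp add: algebra_simps)
  moreover have "0 \<le> c * m" using f_algebra_mult_nonneg[OF f_alg \<open>0 \<le> c\<close> \<open>0 \<le> m\<close>] .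
  ultimately have "m \<le> p + c * p" using \<open>0 \<le> c\<close>
    by (metis add_increasing2 diff_le_eq le_add_same_cancel1 order_trans)
  with disj have "m = 0" by (simp add: inf_absorb1)
  then show ?thesis using b_split \<open>0 \<le> p\<close> by simp
qed

theorem lemma1:
  fixes a :: "'a::{real_algebra, ordered_real_vector, lattice}"
  assumes "f_algebra TYPE('a)"
    and "archimedean_vl TYPE('a)"
    and "semiprime TYPE('a)"
    and "bqi_closed TYPE('a)"
    and "a \<le> 0"
  shows "quasi_invertible a \<and> (\<forall>b. quasi_inverse a b \<longrightarrow> 0 \<le> b)"
  using quasi_invertible_nonpos[OF assms(1,4,5)] quasi_inverse_of_nonpos_nonneg[OF assms(1,5)]
  by blast

end
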